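(* Let $\mathbf{FL}=(FL_0,FL_1,\dots)$ be any sequence of recommendations maximizing long-term engagement, let $(\mathcal U^*,\mathcal C^* )$ be any maximum stable set with recommendation $R^*$, and let $\mathbf{ALG}=(ALG_0,ALG_1,\dots)$ be the sequence with $ALG_t(i)=R^*(i)$ for all $t$ and all $i\in\mathcal U^*$ (and, at $t=0$, $ALG_0(i)$ an arbitrary subset of $\mathcal C^*$ of size $K$ for users $i\in\mathcal U_0\setminus\mathcal U^*$). Then $\mathrm{LTE}(\mathbf{FL})=\mathrm{LTE}(\mathbf{ALG})$.
   Context: An instance consists of a dimension $D$, users $\mathcal U_0=\{1,\dots,U\}$ with types $u_i\in\mathbb R^D_{\ge0}$, creators $\mathcal C_0=\{1,\dots,C\}$ with types $c_j\in\mathbb R^D_{\ge 0}$, all of Euclidean norm $1$, a positive integer $K$, a creator threshold $\bar a\in\mathbb N_0$ and a user threshold $\bar e\in[0,1]$. At time $t=0,1,\dots$ the platform has sets $\mathcal U_t,\mathcal C_t$ and chooses $R_t$ assigning each $i\in\mathcal U_t$ a set $R_t(i)\subseteq\mathcal C_t$ of size $K$ (smaller only if necessary). Engagement $E(\mathcal U,\mathcal C,R)=\sum_{i\in\mathcal U}\sum_{j\in R(i)}u_i^Tc_j$. Then $\mathcal U_{t+1}=\{i\in\mathcal U_t:|R_t(i)|=K,\ u_i^Tc_j\ge\bar e\ \forall j\in R_t(i)\}$, $\mathcal C_{t+1}=\{j\in\mathcal C_t:|\{i\in\mathcal U_t:j\in R_t(i)\}|\ge\bar a\}$. $\mathrm{LTE}(\mathbf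 R)=\lim_{T\to\infty}\frac1T\sum_{t<T}E(\mathcal U_t,\mathcal C_t,R_t)$. $(\mathcal U,\mathcal C)$ with $\mathcal U\subseteq\mathcal U_0$, $\mathcal C\subseteq\mathcal C_0$ is a stable set with recommendation $R$ if $R(i)\subseteq\mathcal C$, $|R(i)|=K$ and $u_i^Tc_j\ge\bar e$ for all $i\in\mathcal U$, $j\in R(i)$, and $|\{i\in\mathcal U:j\in R(i)\}|\ge\bar a$ for all $j\in\mathcal C$; a maximum stable set maximizes $E(\mathcal U,\mathcal C,R)$ among all stable sets with recommendations. *)

theory Defs
  imports "HOL-Analysis.Analysis"
begin

text \<open>An instance. Users are 1..nU, creators are 1..nC; the dimension D is
  the cardinality of the finite index type 'd.\<close>
record 'd inst =
  nU :: nat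
  nC :: nat
  ut :: "nat \<Rightarrow> real ^ 'd"
  ct :: "nat \<Rightarrow> real ^ 'd"
  Kr :: nat
  abar :: nat
  ebar :: real

definition instance_ok :: "'d::finite inst \<Rightarrow> bool" where
  "instance_ok I \<longleftrightarrow>
     Kr I > 0 \<and> 0 \<le> ebar I \<and> ebar I \<le> 1 \<and>
     (\<forall>i\<in>{1..nU I}. norm (ut I i) = 1 \<and> (\<forall>k. 0 \<le> ut I i $ k)) \<and>
     (\<forall>j\<in>{1..nC I}. norm (ct I j) = 1 \<and> (\<forall>k. 0 \<le> ct I j $ k))"

definition engagement :: "'d::finite inst \<Rightarrow> nat set \<Rightarrow> (nat \<Rightarrow> nat set) \<Rightarrow> real" where
  "engagement I Us R = (\<Sum>i\<in>Us. \<Sum>j\<in>R i. ut I i \<bullet> ct I j)"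

text \<open>The sets (U_t, C_t) induced by a recommendation sequence R (time \<Rightarrow> user \<Rightarrow> creators).\<close>
fun states :: "'d::finite inst \<Rightarrow> (nat \<Rightarrow> nat \<Rightarrow> nat set) \<Rightarrow> nat \<Rightarrow> nat set \<times> nat set" where
  "states I R 0 = ({1..nU I}, {1..nC I})"
| "states I R (Suc t) =
     (let Us = fst (states I R t); Cs = snd (states I R t) in
      ({i\<in>Us. card (R t i) = Kr I \<and> (\<forall>j\<in>R t i. ebar I \<le> ut I i \<bullet> ct I j)},
       {j\<in>Cs. abar I \<le> card {i\<in>Us. j \<in> R t i}}))"

abbreviation users_at where "users_at I R t \<equiv> fst (states I R t)"
abbreviation creators_at where "creators_at I R t \<equiv> snd (states I R t)"

definition valid_seq :: "'d::finite inst \<Rightarrow> (nat \<Rightarrow> nat \<Rightarrow> nat set) \<Rightarrow> bool" where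
  "valid_seq I R \<longleftrightarrow>
     (\<forall>t. \<forall>i\<in>users_at I R t.
        R t i \<subseteq> creators_at I R t \<and> card (R t i) = min (Kr I) (card (creators_at I R t)))"

definition avg_eng :: "'d::finite inst \<Rightarrow> (nat \<Rightarrow> nat \<Rightarrow> nat set) \<Rightarrow> nat \<Rightarrow> real" where
  "avg_eng I R T = (1 / real T) * (\<Sum>t<T. engagement I (users_at I R t) (R t))"

definition has_LTE :: "'d::finite inst \<Rightarrow> (nat \<Rightarrow> nat \<Rightarrow> nat set) \<Rightarrow> bool" where
  "has_LTE I R \<longleftrightarrow> convergent (avg_eng I R)"

definition LTE :: "'d::finite inst \<Rightarrow> (nat \<Rightarrow> nat \<Rightarrow> nat set) \<Rightarrow> real" where
  "LTE I R = lim (avg_eng I R)"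

definition maximizes_LTE :: "'d::finite inst \<Rightarrow> (nat \<Rightarrow> nat \<Rightarrow> nat set) \<Rightarrow> bool" where
  "maximizes_LTE I R \<longleftrightarrow> valid_seq I R \<and> has_LTE I R \<and>
     (\<forall>R'. valid_seq I R' \<and> has_LTE I R' \<longrightarrow> LTE I R' \<le> LTE I R)"

definition stable_set :: "'d::finite inst \<Rightarrow> nat set \<Rightarrow> nat set \<Rightarrow> (nat \<Rightarrow> nat set) \<Rightarrow> bool" where
  "stable_set I Us Cs R \<longleftrightarrow> Us \<subseteq> {1..nU I} \<and> Cs \<subseteq> {1..nC I} \<and>
     (\<forall>i\<in>Us. R i \<subseteq> Cs \<and> card (R i) = Kr I \<and> (\<forall>j\<in>R i. ebar I \<le> ut I i \<bullet> ct I j)) \<and>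
     (\<forall>j\<in>Cs. abar I \<le> card {i\<in>Us. j \<in> R i})"

definition max_stable_set :: "'d::finite inst \<Rightarrow> nat set \<Rightarrow> nat set \<Rightarrow> (nat \<Rightarrow> nat set) \<Rightarrow> bool" where
  "max_stable_set I Us Cs R \<longleftrightarrow> stable_set I Us Cs R \<and>
     (\<forall>Us' Cs' R'. stable_set I Us' Cs' R' \<longrightarrow> engagement I Us' R' \<le> engagement I Us R)"

end

theory Submission
  imports Defs
begin

text \<open>
  Users and creators only ever leave, so the finite sets \<open>(U\<^sub>t, C\<^sub>t)\<close> of any admissible
  sequence are eventually constant, and a fixed point of the dynamics together with the
  current recommendation is a stable set. Hence the per-step engagement of every admissible
  sequence is eventually at most the engagement \<open>E\<^sup>*\<close> of a maximum stable set, and its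
  long-term engagement is at most \<open>E\<^sup>*\<close>. The sequence that always recommends \<open>R\<^sup>*\<close> to
  \<open>U\<^sup>*\<close> never loses anyone of \<open>(U\<^sup>*, C\<^sup>*)\<close>, and by nonnegativity of all inner products
  its engagement is always at least \<open>E\<^sup>*\<close>, hence eventually exactly \<open>E\<^sup>*\<close>. So it attains
  the upper bound, and an optimal sequence can do no better.
\<close>

definition running_average :: "(nat \<Rightarrow> real) \<Rightarrow> nat \<Rightarrow> real" where
  "running_average a T = 1 / real T * (\<Sum>t<T. a t)"

lemma running_average_eventually_const:
  assumes "\<forall>\<^sub>F t in sequentially. a t = c"
  shows "running_average a \<longlonglongrightarrow> c"
proof -
  obtain N where N: "\<And>t. t \<ge> N \<Longrightarrow> a t = c"
    using assms by (auto simp: eventually_sequentially)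
  have "running_average a T = (\<Sum>t<N. a t - c) / real T + c" if "T \<ge> Suc N" for T
  proof -
    have "(\<Sum>t<T. a t - c) = (\<Sum>t<N. a t - c)"
      using that N by (intro sum.mono_neutral_right) auto
    then show ?thesis
      using that by (simp add: running_average_def sum_subtractf field_simps)
  qed
  then have "\<forall>\<^sub>F T in sequentially. (\<Sum>t<N. a t - c) / real T + c = running_average a T"
    by (intro eventually_sequentiallyI[of "Suc N"]) simp
  moreover have "(\<lambda>T. (\<Sum>t<N. a t - c) / real T + c) \<longlonglongrightarrow> c"
    using tendsto_add[OF lim_const_over_n tendsto_const] by simp
  ultimately show ?thesis
    by (rule Lim_transform_eventually[rotated])
qed

lemma running_average_limit_le:
  assumes "\<forall>\<^sub>F t in sequentially. a t \<le> c" and "running_average a \<longlonglongrightarrow> L"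
  shows "L \<le> c"
proof -
  have "running_average (\<lambda>t. max (a t) c) \<longlonglongrightarrow> c"
    using assms(1) by (intro running_average_eventually_const) (auto elim: eventually_mono)
  moreover have "running_average a T \<le> running_average (\<lambda>t. max (a t) c) T" for T
    unfolding running_average_def by (intro mult_left_mono sum_mono) auto
  ultimately show ?thesis
    using assms(2) by (intro LIMSEQ_le) auto
qed

lemma antimono_finite_sets_eventually_const:
  assumes "finite (A 0)" and "\<And>t. A (Suc t) \<subseteq> A t"
  shows "\<forall>\<^sub>F t in sequentially. A (Suc t) = A t"
proof -
  have anti: "A t' \<subseteq> A t" if "t \<le> t'" for t t'
    using assms(2) that by (rule lift_Suc_antimono_le)
  have fin: "finite (A t)" for t
    using anti[of 0 t] assms(1) by (auto intro: finite_subset)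
  obtain T where T: "\<And>t. card (A T) \<le> card (A t)"
    using ex_has_least_nat[of "\<lambda>_. True" 0 "\<lambda>t. card (A t)"] by blast
  have "A t = A T" if "t \<ge> T" for t
    using card_seteq[OF fin anti[OF that] T] .
  then show ?thesis
    unfolding eventually_sequentially by (metis le_SucI)
qed

lemma users_at_Suc_subset: "users_at I R (Suc t) \<subseteq> users_at I R t"
  by (auto simp: Let_def)

lemma creators_at_Suc_subset: "creators_at I R (Suc t) \<subseteq> creators_at I R t"
  by (auto simp: Let_def)

lemma users_at_subset: "users_at I R t \<subseteq> {1..nU I}"
  using lift_Suc_antimono_le[of "users_at I R", OF users_at_Suc_subset, of 0 t] by simp

lemma creators_at_subset: "creators_at I R t \<subseteq> {1..nC I}"
  using lift_Suc_antimono_le[of "creators_at I R", OF creators_at_Suc_subset, of 0 t] by simp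

lemma finite_users_at [simp]: "finite (users_at I R t)"
  using users_at_subset by (rule finite_subset) simp

lemma states_eventually_fixed: "\<forall>\<^sub>F t in sequentially. states I R (Suc t) = states I R t"
proof -
  have "\<forall>\<^sub>F t in sequentially. users_at I R (Suc t) = users_at I R t"
    by (intro antimono_finite_sets_eventually_const users_at_Suc_subset) simp
  moreover have "\<forall>\<^sub>F t in sequentially. creators_at I R (Suc t) = creators_at I R t"
    by (intro antimono_finite_sets_eventually_const creators_at_Suc_subset) simp
  ultimately show ?thesis
    by eventually_elim (simp add: prod_eq_iff)
qed

lemma stable_set_at_fixed_state:
  assumes "valid_seq I R" and "states I R (Suc t) = states I R t"
  shows "stable_set I (users_at I R t) (creators_at I R t) (R t)"
proof -
  let ?U = "users_at I R t" and ?C = "creators_at I R t"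
  have U: "{i\<in>?U. card (R t i) = Kr I \<and> (\<forall>j\<in>R t i. ebar I \<le> ut I i \<bullet> ct I j)} = ?U"
    using arg_cong[OF assms(2), of fst] by (simp add: Let_def)
  have C: "{j\<in>?C. abar I \<le> card {i\<in>?U. j \<in> R t i}} = ?C"
    using arg_cong[OF assms(2), of snd] by (simp add: Let_def)
  show ?thesis
    unfolding stable_set_def
  proof (intro conjI ballI users_at_subset creators_at_subset)
    fix i assume "i \<in> ?U"
    then show "R t i \<subseteq> ?C"
      using assms(1) by (simp add: valid_seq_def)
    show "card (R t i) = Kr I"
      using U \<open>i \<in> ?U\<close> by blast
    show "ebar I \<le> ut I i \<bullet> ct I j" if "j \<in> R t i" for j
      using U \<open>i \<in> ?U\<close> that by blast
  next
    fix j assume "j \<in> ?C"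
    then show "abar I \<le> card {i\<in>?U. j \<in> R t i}"
      using C by blast
  qed
qed

definition engagement_at :: "'d::finite inst \<Rightarrow> (nat \<Rightarrow> nat \<Rightarrow> nat set) \<Rightarrow> nat \<Rightarrow> real" where
  "engagement_at I R t = engagement I (users_at I R t) (R t)"

lemma avg_eng_eq_running_average: "avg_eng I R = running_average (engagement_at I R)"
  by (simp add: fun_eq_iff avg_eng_def running_average_def engagement_at_def)

lemma engagement_at_eventually_le_max_stable:
  assumes "valid_seq I R" and "max_stable_set I Us Cs Rs"
  shows "\<forall>\<^sub>F t in sequentially. engagement_at I R t \<le> engagement I Us Rs"
  using states_eventually_fixed[of I R]
proof eventually_elim
  case (elim t)
  then have "stable_set I (users_at I R t) (creators_at I R t) (R t)"
    using assms(1) by (rule stable_set_at_fixed_state[rotated])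
  then show ?case
    using assms(2) by (simp add: max_stable_set_def engagement_at_def)
qed

lemma LTE_le_max_stable:
  assumes "valid_seq I R" and "has_LTE I R" and "max_stable_set I Us Cs Rs"
  shows "LTE I R \<le> engagement I Us Rs"
proof (rule running_average_limit_le)
  show "\<forall>\<^sub>F t in sequentially. engagement_at I R t \<le> engagement I Us Rs"
    using assms(1,3) by (rule engagement_at_eventually_le_max_stable)
  show "running_average (engagement_at I R) \<longlonglongrightarrow> LTE I R"
    using assms(2) by (simp add: has_LTE_def LTE_def convergent_LIMSEQ_iff avg_eng_eq_running_average)
qed

lemma engagement_mono_users:
  assumes "instance_ok I" and "Us \<subseteq> Us'" and "Us' \<subseteq> {1..nU I}"
    and "\<And>i. i \<in> Us' \<Longrightarrow> R i \<subseteq> {1..nC I}"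
  shows "engagement I Us R \<le> engagement I Us' R"
  unfolding engagement_def
proof (rule sum_mono2)
  show "finite Us'"
    using assms(3) by (rule finite_subset) simp
  fix i assume i: "i \<in> Us' - Us"
  show "0 \<le> (\<Sum>j\<in>R i. ut I i \<bullet> ct I j)"
  proof (rule sum_nonneg)
    fix j assume "j \<in> R i"
    then have "i \<in> {1..nU I}" and "j \<in> {1..nC I}"
      using assms(3,4) i by blast+
    then have "0 \<le> ut I i" and "0 \<le> ct I j"
      using assms(1) by (simp_all add: instance_ok_def less_eq_vec_def)
    then show "0 \<le> ut I i \<bullet> ct I j"
      by (rule inner_nonneg_nonneg)
  qed
qed (use assms(2) in blast)

lemma stable_set_persists:
  assumes "stable_set I Us Cs Rs" and "\<And>t i. i \<in> Us \<Longrightarrow> R t i = Rs i"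
  shows "Us \<subseteq> users_at I R t \<and> Cs \<subseteq> creators_at I R t"
proof (induction t)
  case 0
  then show ?case
    using assms(1) by (simp add: stable_set_def)
next
  case (Suc t)
  have "Us \<subseteq> users_at I R (Suc t)"
    using Suc assms by (auto simp: stable_set_def Let_def)
  moreover have "Cs \<subseteq> creators_at I R (Suc t)"
  proof
    fix j assume j: "j \<in> Cs"
    have "abar I \<le> card {i\<in>Us. j \<in> Rs i}"
      using assms(1) j by (simp add: stable_set_def)
    also have "\<dots> \<le> card {i\<in>users_at I R t. j \<in> R t i}"
      using Suc assms(2) by (intro card_mono) auto
    finally show "j \<in> creators_at I R (Suc t)"
      using Suc j by (auto simp: Let_def)
  qed
  ultimately show ?case ..
qed

lemma engagement_at_ge_stable_set:
  assumes "instance_ok I" and "valid_seq I R" and "stable_set I Us Cs Rs"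
    and "\<And>t i. i \<in> Us \<Longrightarrow> R t i = Rs i"
  shows "engagement I Us Rs \<le> engagement_at I R t"
proof -
  have "engagement I Us Rs = engagement I Us (R t)"
    using assms(4) by (simp add: engagement_def)
  also have "\<dots> \<le> engagement_at I R t"
    unfolding engagement_at_def
  proof (rule engagement_mono_users[OF assms(1) _ users_at_subset])
    show "Us \<subseteq> users_at I R t"
      using stable_set_persists[of I Us Cs Rs R t] assms(3,4) by blast
    show "R t i \<subseteq> {1..nC I}" if "i \<in> users_at I R t" for i
    proof -
      have "R t i \<subseteq> creators_at I R t"
        using assms(2) that by (simp add: valid_seq_def)
      then show ?thesis
        using creators_at_subset by blast
    qed
  qed
  finally show ?thesis .
qed

lemma avg_eng_following_max_stable:
  assumes "instance_ok I" and "valid_seq I R" and "max_stable_set I Us Cs Rs"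
    and "\<And>t i. i \<in> Us \<Longrightarrow> R t i = Rs i"
  shows "avg_eng I R \<longlonglongrightarrow> engagement I Us Rs"
  unfolding avg_eng_eq_running_average
proof (rule running_average_eventually_const)
  have "stable_set I Us Cs Rs"
    using assms(3) by (simp add: max_stable_set_def)
  with assms(1,2,4) have lower: "engagement I Us Rs \<le> engagement_at I R t" for t
    by (intro engagement_at_ge_stable_set)
  show "\<forall>\<^sub>F t in sequentially. engagement_at I R t = engagement I Us Rs"
    using engagement_at_eventually_le_max_stable[OF assms(2,3)]
    by eventually_elim (rule order_antisym[OF _ lower])
qed

theorem proposition1:
  fixes I :: "'d::finite inst"
    and FL ALG :: "nat \<Rightarrow> nat \<Rightarrow> nat set"
    and Ustar Cstar :: "nat set" and Rstar :: "nat \<Rightarrow> nat set"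
  assumes "instance_ok I"
    and "maximizes_LTE I FL"
    and "max_stable_set I Ustar Cstar Rstar"
    and "valid_seq I ALG"
    and "\<forall>t. \<forall>i\<in>Ustar. ALG t i = Rstar i"
    and "\<forall>i\<in>{1..nU I} - Ustar. ALG 0 i \<subseteq> Cstar \<and> card (ALG 0 i) = Kr I"
  shows "has_LTE I ALG \<and> LTE I FL = LTE I ALG"
proof -
  have "avg_eng I ALG \<longlonglongrightarrow> engagement I Ustar Rstar"
    using assms(1,3,4,5) by (intro avg_eng_following_max_stable) auto
  then have has_LTE: "has_LTE I ALG" and LTE: "LTE I ALG = engagement I Ustar Rstar"
    by (auto simp: has_LTE_def LTE_def convergentI limI)
  have "LTE I ALG \<le> LTE I FL" and "LTE I FL \<le> engagement I Ustar Rstar"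
    using assms(2,3,4) has_LTE by (auto simp: maximizes_LTE_def intro: LTE_le_max_stable)
  with has_LTE LTE show ?thesis
    by simp
qed

end
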